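(* Let $n\ge 5$ and $M\ge 1$ be integers and $U=\{0,1,\ldots,M-1\}$. Suppose there is a $2$-coloring $\phi:\binom{U}{2}\to\{\text{red},\text{blue}\}$ such that every $n$-element subset of $U$ contains three elements $x<y<z$ with $\phi(x,y)=\phi(y,z)\ne\phi(x,z)$. Then \[ r_4(5,\,2^6n^5+1)\ >\ 2^{M}. \]
   Context: For integers $k<s$ and $n$, the Ramsey number $r_k(s,n)$ is the smallest integer $N$ such that every $k$-uniform hypergraph on $N$ vertices contains either a copy of the complete $k$-uniform hypergraph $K_s^{(k)}$ on $s$ vertices or an independent set of size $n$ (a set of $n$ vertices containing no edge). For distinct $x,y\in U$ we write $\phi(x,y)=\phi(y,x)$ for the color of the pair $\{x,y\}$. *)

theory Defs
  imports Main
begin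

definition uniform_hypergraph :: "nat \<Rightarrow> nat \<Rightarrow> nat set set \<Rightarrow> bool" where
  "uniform_hypergraph k N H \<longleftrightarrow> (\<forall>e\<in>H. e \<subseteq> {0..<N} \<and> card e = k)"

definition has_clique :: "nat \<Rightarrow> nat \<Rightarrow> nat \<Rightarrow> nat set set \<Rightarrow> bool" where
  "has_clique k s N H \<longleftrightarrow>
     (\<exists>S. S \<subseteq> {0..<N} \<and> card S = s \<and> {e. e \<subseteq> S \<and> card e = k} \<subseteq> H)"

definition has_indep :: "nat \<Rightarrow> nat \<Rightarrow> nat set set \<Rightarrow> bool" where
  "has_indep n N H \<longleftrightarrow> (\<exists>I. I \<subseteq> {0..<N} \<and> card I = n \<and> (\<forall>e\<in>H. \<not> e \<subseteq> I))"

definition hramsey :: "nat \<Rightarrow> nat \<Rightarrow> nat \<Rightarrow> nat" where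
  "hramsey k s n = (LEAST N. \<forall>H. uniform_hypergraph k N H \<longrightarrow> has_clique k s N H \<or> has_indep n N H)"

end

theory Submission
  imports Defs "HOL-Library.Ramsey"
begin

(*
  Stepping up. Read the vertices 0, ..., 2^M - 1 as binary strings and let diff_bit a b be the
  highest bit in which a and b differ. It behaves like an ultrametric: for x < y < z the values
  diff_bit x y and diff_bit y z differ and diff_bit x z is their maximum. A 4-set a < b < c < d is
  an edge when the consecutive values diff_bit a b, diff_bit b c, diff_bit c d, coloured by phi,
  follow one of the patterns of edge_pattern. Inside a 5-set all these sequences are determined by
  the four consecutive values, and a case analysis shows that one 4-subset is not an edge.

  Let I be independent and a in I. Any three positions w < u2 < u1 in which a differs from other
  elements of I are realised by four vertices of I, whose order is fixed by the bits of a at u1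
  and u2; since they span no edge, phi is constrained on {w, u2, u1}. So the positions where a
  has a given bit contain none of the triples provided by the hypothesis, whence a differs from
  the rest of I in at most 2n - 2 positions; and, listing these positions downwards, the bit of a
  changes at most four times. Thus a is determined by the number L of its positions together with
  the ranks of those where its bit is set, a subset of {..<L} with at most four changes, and
  there are at most 64 n^5 such pairs.
*)

section \<open>The highest differing bit\<close>

(* For a = b this is the junk value 0. *)
definition diff_bit :: "nat \<Rightarrow> nat \<Rightarrow> nat" where
  "diff_bit a b = (LEAST u. a div 2 ^ Suc u = b div 2 ^ Suc u)"

lemma div_pow2_eq_mono:
  assumes "a div 2 ^ k = b div 2 ^ k" "k \<le> j"
  shows "a div (2::nat) ^ j = b div 2 ^ j"
proof -
  have "(2::nat) ^ j = 2 ^ k * 2 ^ (j - k)"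
    using assms(2) by (simp flip: power_add)
  then show ?thesis
    using assms(1) by (simp add: div_mult2_eq)
qed

lemma div_pow2_eq_iff_diff_bit_less:
  assumes "a \<noteq> b"
  shows "a div 2 ^ k = b div (2::nat) ^ k \<longleftrightarrow> diff_bit a b < k"
proof
  assume eq: "a div 2 ^ k = b div 2 ^ k"
  then obtain j where "k = Suc j"
    using assms by (cases k) auto
  with eq show "diff_bit a b < k"
    unfolding diff_bit_def using Least_le[of "\<lambda>u. a div 2 ^ Suc u = b div 2 ^ Suc u" j]
    by simp
next
  assume less: "diff_bit a b < k"
  have "x < 2 ^ Suc (a + b)" if "x \<le> a + b" for x :: nat
    using that less_exp[of "Suc (a + b)"] by linarith
  then have "a div 2 ^ Suc (a + b) = b div 2 ^ Suc (a + b)"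
    by (simp add: div_less)
  then have "a div 2 ^ Suc (diff_bit a b) = b div 2 ^ Suc (diff_bit a b)"
    unfolding diff_bit_def by (rule LeastI)
  with less show "a div 2 ^ k = b div 2 ^ k"
    by (metis div_pow2_eq_mono Suc_leI)
qed

lemma diff_bit_commute: "diff_bit a b = diff_bit b a"
  unfolding diff_bit_def by (simp add: eq_commute)

lemma diff_bit_less:
  assumes "a < 2 ^ M" "b < 2 ^ M" "a \<noteq> b"
  shows "diff_bit a b < M"
  using div_pow2_eq_iff_diff_bit_less[OF assms(3), of M] assms(1,2) by simp

lemma bit_eq_above_diff_bit:
  assumes "a \<noteq> b" "diff_bit a b < u"
  shows "bit a u = bit b u"
proof -
  have "a div 2 ^ u = b div 2 ^ u"
    using assms div_pow2_eq_iff_diff_bit_less by blast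
  then show ?thesis
    by (simp add: bit_iff_odd)
qed

lemma less_iff_bit_diff_bit:
  assumes "a \<noteq> b"
  shows "a < b \<longleftrightarrow> bit b (diff_bit a b)"
proof -
  let ?u = "diff_bit a b"
  have ne: "a div 2 ^ ?u \<noteq> b div 2 ^ ?u"
    using div_pow2_eq_iff_diff_bit_less[OF assms] by blast
  have "a div 2 ^ Suc ?u = b div 2 ^ Suc ?u"
    using div_pow2_eq_iff_diff_bit_less[OF assms] by blast
  then have halves: "a div 2 ^ ?u div 2 = b div 2 ^ ?u div 2"
    by (metis div_mult2_eq power_Suc2)
  have parity: "odd y \<and> even x" if "x < y" "x div 2 = y div 2" for x y :: nat
    using that by presburger
  show ?thesis
  proof
    assume "a < b"
    then have "a div 2 ^ ?u < b div 2 ^ ?u"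
      using ne div_le_mono[of a b "2 ^ ?u"] by simp
    with halves parity show "bit b ?u"
      by (simp add: bit_iff_odd)
  next
    assume "bit b ?u"
    with ne halves parity have "a div 2 ^ ?u < b div 2 ^ ?u"
      by (metis bit_iff_odd linorder_neqE_nat)
    then show "a < b"
      by (metis div_le_mono not_less)
  qed
qed

lemma diff_bit_ultrametric:
  assumes "a \<noteq> b" "a \<noteq> c" "diff_bit a b < diff_bit a c"
  shows "diff_bit b c = diff_bit a c"
proof -
  let ?u = "diff_bit a c"
  have "b \<noteq> c"
    using assms by auto
  note ab = div_pow2_eq_iff_diff_bit_less[OF assms(1)]
    and ac = div_pow2_eq_iff_diff_bit_less[OF assms(2)]
    and bc = div_pow2_eq_iff_diff_bit_less[OF \<open>b \<noteq> c\<close>]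
  have "\<not> diff_bit b c < ?u"
    using ab[of ?u] ac[of ?u] bc[of ?u] assms(3) by simp
  moreover have "diff_bit b c < Suc ?u"
    using ab[of "Suc ?u"] ac[of "Suc ?u"] bc[of "Suc ?u"] assms(3) by simp
  ultimately show ?thesis
    by simp
qed

lemma diff_bit_chain:
  assumes "x < y" "y < z"
  shows "diff_bit x y \<noteq> diff_bit y z" "diff_bit x z = max (diff_bit x y) (diff_bit y z)"
proof -
  have "bit y (diff_bit x y)" "\<not> bit y (diff_bit y z)"
    using assms less_iff_bit_diff_bit[of x y] less_iff_bit_diff_bit[of z y] diff_bit_commute[of z y]
    by auto
  then show ne: "diff_bit x y \<noteq> diff_bit y z"
    by auto
  have yx: "diff_bit y x = diff_bit x y" and zx: "diff_bit z x = diff_bit x z"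
    by (rule diff_bit_commute)+
  show "diff_bit x z = max (diff_bit x y) (diff_bit y z)"
  proof (cases "diff_bit x y < diff_bit y z")
    case True
    then show ?thesis
      using assms diff_bit_ultrametric[of y x z] yx by simp
  next
    case False
    with ne have "diff_bit y z < diff_bit y x"
      using yx by simp
    then show ?thesis
      using assms diff_bit_ultrametric[of y z x] False yx zx by simp
  qed
qed

section \<open>The stepping-up hypergraph\<close>

definition edge_pattern :: "(nat set \<Rightarrow> bool) \<Rightarrow> nat \<Rightarrow> nat \<Rightarrow> nat \<Rightarrow> bool" where
  "edge_pattern \<phi> d1 d2 d3 \<longleftrightarrow>
     ((d1 < d2 \<and> d2 < d3 \<or> d3 < d2 \<and> d2 < d1) \<and> \<phi> {d1, d2} = \<phi> {d2, d3} \<and> \<phi> {d1, d3} \<noteq> \<phi> {d2, d3})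
   \<or> (d2 < d1 \<and> d1 < d3 \<and> \<phi> {d1, d2} \<noteq> \<phi> {d2, d3})
   \<or> (d2 < d3 \<and> d3 < d1 \<and> \<phi> {d1, d2} = \<phi> {d2, d3} \<and> \<phi> {d1, d3} = \<phi> {d2, d3})"

definition stepup_hypergraph :: "nat \<Rightarrow> (nat set \<Rightarrow> bool) \<Rightarrow> nat set set" where
  "stepup_hypergraph M \<phi> =
     {{a, b, c, d} | a b c d. a < b \<and> b < c \<and> c < d \<and> d < 2 ^ M \<and>
        edge_pattern \<phi> (diff_bit a b) (diff_bit b c) (diff_bit c d)}"

lemma sorted_list_of_set_four:
  fixes a b c d :: nat
  assumes "a < b" "b < c" "c < d"
  shows "sorted_list_of_set {a, b, c, d} = [a, b, c, d]"
  using assms by (simp add: sorted_list_of_set_unique[symmetric])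

lemma mem_stepup_hypergraph_iff:
  assumes "a < b" "b < c" "c < d"
  shows "{a, b, c, d} \<in> stepup_hypergraph M \<phi> \<longleftrightarrow>
           d < 2 ^ M \<and> edge_pattern \<phi> (diff_bit a b) (diff_bit b c) (diff_bit c d)"
proof
  assume "{a, b, c, d} \<in> stepup_hypergraph M \<phi>"
  then obtain a' b' c' d' where sorted: "a' < b'" "b' < c'" "c' < d'"
    and eq: "{a', b', c', d'} = {a, b, c, d}"
    and "d' < 2 ^ M \<and> edge_pattern \<phi> (diff_bit a' b') (diff_bit b' c') (diff_bit c' d')"
    unfolding stepup_hypergraph_def by auto
  moreover have "[a', b', c', d'] = [a, b, c, d]"
    using sorted_list_of_set_four[OF sorted] sorted_list_of_set_four[OF assms] unfolding eq
    by (rule trans[OF sym])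
  ultimately show "d < 2 ^ M \<and> edge_pattern \<phi> (diff_bit a b) (diff_bit b c) (diff_bit c d)"
    by simp
next
  assume "d < 2 ^ M \<and> edge_pattern \<phi> (diff_bit a b) (diff_bit b c) (diff_bit c d)"
  with assms show "{a, b, c, d} \<in> stepup_hypergraph M \<phi>"
    unfolding stepup_hypergraph_def by blast
qed

lemma uniform_stepup_hypergraph: "uniform_hypergraph 4 (2 ^ M) (stepup_hypergraph M \<phi>)"
  unfolding uniform_hypergraph_def stepup_hypergraph_def by auto

lemma edge_pattern_middle_not_max: "edge_pattern \<phi> d1 d2 d3 \<Longrightarrow> \<not> (d1 < d2 \<and> d3 < d2)"
  unfolding edge_pattern_def by auto

lemma edge_patterns_of_five:
  assumes "s1 < s2" "s2 < s3" "s3 < s4" "s4 < s5"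
  shows "\<not> (edge_pattern \<phi> (diff_bit s1 s2) (diff_bit s2 s3) (diff_bit s3 s4) \<and>
            edge_pattern \<phi> (diff_bit s2 s3) (diff_bit s3 s4) (diff_bit s4 s5) \<and>
            edge_pattern \<phi> (diff_bit s1 s2) (diff_bit s2 s3) (diff_bit s3 s5) \<and>
            edge_pattern \<phi> (diff_bit s1 s2) (diff_bit s2 s4) (diff_bit s4 s5) \<and>
            edge_pattern \<phi> (diff_bit s1 s3) (diff_bit s3 s4) (diff_bit s4 s5))"
    (is "\<not> (?E1 \<and> ?E2 \<and> ?E3 \<and> ?E4 \<and> ?E5)")
proof
  assume E: "?E1 \<and> ?E2 \<and> ?E3 \<and> ?E4 \<and> ?E5"
  define d1 d2 d3 d4 where "d1 = diff_bit s1 s2" "d2 = diff_bit s2 s3"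
    "d3 = diff_bit s3 s4" "d4 = diff_bit s4 s5"
  have lt: "s1 < s3" "s2 < s4" "s3 < s5"
    using assms by simp_all
  have merged: "diff_bit s1 s3 = max d1 d2" "diff_bit s2 s4 = max d2 d3"
    "diff_bit s3 s5 = max d3 d4" "diff_bit s1 s4 = max (max d1 d2) d3"
    "diff_bit s2 s5 = max (max d2 d3) d4"
    unfolding d1_d2_d3_d4_def
    using diff_bit_chain(2)[OF assms(1,2)] diff_bit_chain(2)[OF assms(2,3)]
      diff_bit_chain(2)[OF assms(3,4)] diff_bit_chain(2)[OF lt(1) assms(3)]
      diff_bit_chain(2)[OF lt(2) assms(4)] by simp_all
  have ne: "d1 \<noteq> d2" "d2 \<noteq> d3" "d3 \<noteq> d4" "max d1 d2 \<noteq> d3" "d2 \<noteq> max d3 d4"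
    "max d2 d3 \<noteq> d4" "d1 \<noteq> max d2 d3" "max d1 d2 \<noteq> max d3 d4"
    "max (max d1 d2) d3 \<noteq> d4" "d1 \<noteq> max (max d2 d3) d4"
    using diff_bit_chain(1)[OF assms(1,2)] diff_bit_chain(1)[OF assms(2,3)]
      diff_bit_chain(1)[OF assms(3,4)] diff_bit_chain(1)[OF lt(1) assms(3)]
      diff_bit_chain(1)[OF assms(2) lt(3)] diff_bit_chain(1)[OF lt(2) assms(4)]
      diff_bit_chain(1)[OF assms(1) lt(2)] diff_bit_chain(1)[OF lt(1,3)]
      diff_bit_chain(1)[OF less_trans[OF lt(1) assms(3)] assms(4)]
      diff_bit_chain(1)[OF assms(1) less_trans[OF lt(2) assms(4)]]
    by (simp_all add: merged d1_d2_d3_d4_def[symmetric])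
  have P: "edge_pattern \<phi> d1 d2 d3" "edge_pattern \<phi> d2 d3 d4" "edge_pattern \<phi> d1 d2 (max d3 d4)"
    "edge_pattern \<phi> d1 (max d2 d3) d4" "edge_pattern \<phi> (max d1 d2) d3 d4"
    using E merged unfolding d1_d2_d3_d4_def by simp_all
  have "\<not> (d1 < d2 \<and> d3 < d2)" "\<not> (d2 < d3 \<and> d4 < d3)"
    using P edge_pattern_middle_not_max by blast+
  then consider "d1 < d2" "d2 < d3" "d3 < d4" | "d2 < d1" "d3 < d2" "d4 < d3"
    | "d2 < d1" "d2 < d3" "d3 < d4" | "d2 < d1" "d3 < d2" "d3 < d4"
    using ne(1-3) by (metis linorder_neqE_nat)
  then show False
  proof cases
    case 1
    then show ?thesis using P by (simp add: max_def edge_pattern_def insert_commute)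
  next
    case 2
    then show ?thesis using P by (simp add: max_def edge_pattern_def insert_commute)
  next
    case 3
    moreover have "d1 \<noteq> d3" "d1 \<noteq> d4"
      using 3 ne(4,10) by (auto simp: max_def)
    ultimately consider "d1 < d3" | "d3 < d1" "d1 < d4" | "d4 < d1"
      by (metis linorder_neqE_nat)
    then show ?thesis
      using 3 P by cases (auto simp: max_def edge_pattern_def insert_commute)
  next
    case 4
    moreover have "d2 \<noteq> d4" "d1 \<noteq> d4"
      using 4 ne(5,9) by (auto simp: max_def)
    ultimately consider "d4 < d2" | "d2 < d4" "d4 < d1" | "d1 < d4"
      by (metis linorder_neqE_nat)
    then show ?thesis
      using 4 P by cases (auto simp: max_def edge_pattern_def insert_commute)
  qed
qed

lemma stepup_hypergraph_no_K5: "\<not> has_clique 4 5 (2 ^ M) (stepup_hypergraph M \<phi>)"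
proof
  assume "has_clique 4 5 (2 ^ M) (stepup_hypergraph M \<phi>)"
  then obtain S where S: "card S = 5" "{e. e \<subseteq> S \<and> card e = 4} \<subseteq> stepup_hypergraph M \<phi>"
    unfolding has_clique_def by blast
  then have "S \<in> [S]\<^bsup>5\<^esup>"
    unfolding nsets_def by (simp add: card_ge_0_finite)
  then obtain s1 s2 s3 s4 s5 where s: "S = {s1, s2, s3, s4, s5}"
    "s1 < s2" "s2 < s3" "s3 < s4" "s4 < s5"
    unfolding ordered_nsets_5_eq by blast
  have "edge_pattern \<phi> (diff_bit a b) (diff_bit b c) (diff_bit c d)"
    if "a < b" "b < c" "c < d" "{a, b, c, d} \<subseteq> S" for a b c d
  proof -
    have "{a, b, c, d} \<in> stepup_hypergraph M \<phi>"
      using S(2) that by auto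
    then show ?thesis
      using mem_stepup_hypergraph_iff[OF that(1-3)] by simp
  qed
  with s show False
    using edge_patterns_of_five[OF s(2-5), of \<phi>] by (simp add: insert_commute)
qed

section \<open>Hypergraph Ramsey numbers as partition relations\<close>

lemma clique_or_indep_if_partn_lst:
  assumes "partn_lst {..<N} [s, n] k" "uniform_hypergraph k N H"
  shows "has_clique k s N H \<or> has_indep n N H"
proof -
  define f where "f e = (if e \<in> H then 0 else 1::nat)" for e
  have "f \<in> [{..<N}]\<^bsup>k\<^esup> \<rightarrow> {..<length [s, n]}"
    by (simp add: f_def)
  then obtain i X where i: "i < length [s, n]" and X: "X \<in> [{..<N}]\<^bsup>([s, n] ! i)\<^esup>" "f ` [X]\<^bsup>k\<^esup> \<subseteq> {i}"
    using assms(1) unfolding partn_lst_def monochromatic_def by blast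
  have "X \<subseteq> {0..<N}" "finite X"
    using X(1) by (auto simp: nsets_def)
  show ?thesis
  proof (cases "i = 0")
    case True
    then have "{e. e \<subseteq> X \<and> card e = k} \<subseteq> H"
      using X(2) \<open>finite X\<close> by (auto simp: nsets_def f_def image_subset_iff intro: finite_subset)
    then show ?thesis
      using True X(1) \<open>X \<subseteq> {0..<N}\<close> unfolding has_clique_def nsets_def by auto
  next
    case False
    with i have "i = 1"
      by simp
    then have "e \<notin> H" if "e \<subseteq> X" "card e = k" for e
      using that X(2) \<open>finite X\<close>
      by (auto simp: nsets_def f_def image_subset_iff intro: finite_subset)
    then have "\<forall>e\<in>H. \<not> e \<subseteq> X"
      using assms(2) unfolding uniform_hypergraph_def by blast
    then show ?thesis
      using \<open>i = 1\<close> X(1) \<open>X \<subseteq> {0..<N}\<close> unfolding has_indep_def nsets_def by auto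
  qed
qed

lemma partn_lst_if_clique_or_indep:
  assumes "\<forall>H. uniform_hypergraph k N H \<longrightarrow> has_clique k s N H \<or> has_indep n N H"
  shows "partn_lst {..<N} [s, n] k"
  unfolding partn_lst_def
proof
  fix f assume f: "f \<in> [{..<N}]\<^bsup>k\<^esup> \<rightarrow> {..<length [s, n]}"
  define H where "H = {e \<in> [{..<N}]\<^bsup>k\<^esup>. f e = 0}"
  have "uniform_hypergraph k N H"
    by (auto simp: uniform_hypergraph_def H_def nsets_def)
  with assms consider "has_clique k s N H" | "has_indep n N H"
    by blast
  then show "\<exists>i<length [s, n]. monochromatic {..<N} ([s, n] ! i) k f i"
  proof cases
    case 1
    then obtain S where "S \<subseteq> {0..<N}" "card S = s" "{e. e \<subseteq> S \<and> card e = k} \<subseteq> H"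
      unfolding has_clique_def by blast
    then have "monochromatic {..<N} s k f 0"
      unfolding monochromatic_def H_def nsets_def
      by (intro bexI[of _ S]) (auto intro: finite_subset)
    then show ?thesis
      by force
  next
    case 2
    then obtain I where I: "I \<subseteq> {0..<N}" "card I = n" "\<forall>e\<in>H. \<not> e \<subseteq> I"
      unfolding has_indep_def by blast
    have "f e = 1" if "e \<in> [I]\<^bsup>k\<^esup>" for e
    proof -
      have "e \<in> [{..<N}]\<^bsup>k\<^esup>"
        using that I(1) by (auto simp: nsets_def)
      moreover have "e \<notin> H"
        using that I(3) by (auto simp: nsets_def)
      ultimately have "f e \<in> {..<length [s, n]}" "f e \<noteq> 0"
        using f unfolding H_def by auto
      then show ?thesis
        by simp
    qed
    then have "monochromatic {..<N} n k f 1"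
      unfolding monochromatic_def using I(1,2)
      by (intro bexI[of _ I]) (auto simp: nsets_def intro: finite_subset)
    then show ?thesis
      by force
  qed
qed

lemma hramsey_eq_Least_partn_lst: "hramsey k s n = (LEAST N. partn_lst {..<N} [s, n] k)"
  unfolding hramsey_def
  by (meson clique_or_indep_if_partn_lst partn_lst_if_clique_or_indep)

lemma less_hramsey:
  assumes "uniform_hypergraph k N H" "\<not> has_clique k s N H" "\<not> has_indep n N H"
  shows "N < hramsey k s n"
proof (rule ccontr)
  assume "\<not> N < hramsey k s n"
  moreover have "partn_lst {..<hramsey k s n} [s, n] k"
    unfolding hramsey_eq_Least_partn_lst using ramsey_full by (rule LeastI_ex)
  ultimately have "partn_lst {..<N} [s, n] k"
    using partn_lst_greater_resource by (meson not_less)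
  then show False
    using clique_or_indep_if_partn_lst assms by blast
qed

section \<open>Ranks, changes and profiles\<close>

definition card_above :: "nat set \<Rightarrow> nat \<Rightarrow> nat" where
  "card_above D u = card {v \<in> D. u < v}"

lemma card_above_strict_antimono:
  assumes "finite D" "u' \<in> D" "u < u'"
  shows "card_above D u' < card_above D u"
  unfolding card_above_def using assms by (intro psubset_card_mono) auto

lemma card_above_less_card:
  assumes "finite D" "u \<in> D"
  shows "card_above D u < card D"
  unfolding card_above_def using assms by (intro psubset_card_mono) auto

lemma inj_on_card_above: "finite D \<Longrightarrow> inj_on (card_above D) D"
  by (rule inj_onI) (metis card_above_strict_antimono less_irrefl linorder_neqE_nat)

lemma bij_betw_card_above:
  assumes "finite D"
  shows "bij_betw (card_above D) D {0..<card D}"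
proof -
  have "card_above D ` D \<subseteq> {0..<card D}"
    using card_above_less_card[OF assms] by auto
  moreover have "card (card_above D ` D) = card {0..<card D}"
    using card_image[OF inj_on_card_above[OF assms]] by simp
  ultimately show ?thesis
    using inj_on_card_above[OF assms] by (simp add: bij_betw_def card_subset_eq)
qed

lemma less_if_steps_less:
  fixes h :: "nat \<Rightarrow> 'a::order"
  assumes "\<And>j. j < k \<Longrightarrow> h j < h (Suc j)" "i < j" "j \<le> k"
  shows "h i < h j"
  using assms(2,3)
proof (induction j)
  case (Suc j)
  then show ?case
    using assms(1)[of j] by (cases "i = j") (auto dest: order.strict_trans)
qed simp

lemma decreasing_elements_with_card_above:
  assumes fin: "finite D" and steps: "\<And>j. j < k \<Longrightarrow> h j < h (Suc j)" and top: "h k < card D"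
  obtains v where "\<And>i. i \<le> k \<Longrightarrow> v i \<in> D \<and> card_above D (v i) = h i"
    and "\<And>i j. i < j \<Longrightarrow> j \<le> k \<Longrightarrow> v j < v i"
proof -
  have ranks: "h i \<in> card_above D ` D" if "i \<le> k" for i
  proof -
    have "h i < card D"
      using less_if_steps_less[of k h i k, OF steps] that top by (cases "i = k") auto
    then show ?thesis
      using bij_betw_imp_surj_on[OF bij_betw_card_above[OF fin]] by simp
  qed
  define v where "v i = the_inv_into D (card_above D) (h i)" for i
  have v: "v i \<in> D \<and> card_above D (v i) = h i" if "i \<le> k" for i
    unfolding v_def using inj_on_card_above[OF fin] ranks[of i] that
    by (simp add: the_inv_into_into f_the_inv_into_f)
  moreover have "v j < v i" if "i < j" "j \<le> k" for i j
  proof -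
    have "card_above D (v i) < card_above D (v j)" "v j \<in> D"
      using v[of i] v[of j] less_if_steps_less[of k h i j, OF steps] that by simp_all
    then show ?thesis
      using card_above_strict_antimono[OF fin, of "v j" "v i"] by (metis less_asym linorder_neqE_nat)
  qed
  ultimately show thesis
    by (rule that)
qed

definition changes :: "nat \<Rightarrow> (nat \<Rightarrow> bool) \<Rightarrow> nat set" where
  "changes m f = {i. Suc i < m \<and> f (Suc i) \<noteq> f i}"

lemma changes_subset: "changes m f \<subseteq> {..<m}"
  unfolding changes_def by auto

lemma alternating_chain:
  assumes "k \<le> card (changes (Suc m) f)"
  shows "\<exists>g. (\<forall>j<k. g j < g (Suc j) \<and> f (g (Suc j)) \<noteq> f (g j)) \<and> g k = m"
  using assms
proof (induction m arbitrary: k)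
  case 0
  then have "k = 0"
    unfolding changes_def by simp
  then show ?case
    by auto
next
  case (Suc m)
  have extend: "\<exists>g'. (\<forall>j<k. g' j < g' (Suc j) \<and> f (g' (Suc j)) \<noteq> f (g' j)) \<and> g' k = Suc m"
    if "\<forall>j<k'. g j < g (Suc j) \<and> f (g (Suc j)) \<noteq> f (g j)" "g k' = m"
      and "k = k' \<and> f (Suc m) = f m \<or> k = Suc k' \<and> f (Suc m) \<noteq> f m" for k' g
    using that by (intro exI[of _ "g(k := Suc m)"]) (auto simp: less_Suc_eq)
  show ?case
  proof (cases "f (Suc m) = f m")
    case True
    then have "changes (Suc (Suc m)) f = changes (Suc m) f"
      unfolding changes_def by (auto simp: less_Suc_eq)
    with Suc.prems obtain g where "\<forall>j<k. g j < g (Suc j) \<and> f (g (Suc j)) \<noteq> f (g j)" "g k = m"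
      using Suc.IH[of k] by auto
    with True show ?thesis
      using extend[of k g] by blast
  next
    case False
    then have "changes (Suc (Suc m)) f = insert m (changes (Suc m) f)"
      unfolding changes_def by (auto simp: less_Suc_eq)
    moreover have "m \<notin> changes (Suc m) f" "finite (changes (Suc m) f)"
      using changes_subset finite_subset by (auto simp: changes_def)
    ultimately have "card (changes (Suc (Suc m)) f) = Suc (card (changes (Suc m) f))"
      by simp
    show ?thesis
    proof (cases k)
      case 0
      then show ?thesis
        by auto
    next
      case (Suc k')
      with Suc.prems \<open>card _ = Suc _\<close> obtain g
        where "\<forall>j<k'. g j < g (Suc j) \<and> f (g (Suc j)) \<noteq> f (g j)" "g k' = m"
        using Suc.IH[of k'] by auto
      with False \<open>k = Suc k'\<close> show ?thesis
        using extend[of k' g] by blast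
    qed
  qed
qed

lemma eq_if_same_changes:
  assumes "f 0 = g 0" "changes m f = changes m g" "i < m"
  shows "f i = g i"
  using assms(3)
proof (induction i)
  case 0
  then show ?case
    using assms(1) by simp
next
  case (Suc i)
  then have "i \<in> changes m f \<longleftrightarrow> i \<in> changes m g"
    using assms(2) by simp
  with Suc show ?case
    unfolding changes_def by auto
qed

definition profiles :: "nat \<Rightarrow> (nat \<times> nat set) set" where
  "profiles m = {(L, Z). L \<le> m \<and> Z \<subseteq> {..<L} \<and> card (changes (L - 1) (\<lambda>i. i \<in> Z)) \<le> 4}"

(* L is recovered as the maximum of the third component, since all changes lie below L. *)
definition profile_code :: "nat \<times> nat set \<Rightarrow> bool \<times> bool \<times> nat set" where
  "profile_code = (\<lambda>(L, Z). (0 \<in> Z, L - 1 \<in> Z, insert L (changes (L - 1) (\<lambda>i. i \<in> Z))))"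

lemma inj_on_profile_code: "inj_on profile_code {(L, Z). Z \<subseteq> {..<L}}"
proof (rule inj_onI, clarify)
  fix L Z L' Z' assume Z: "Z \<subseteq> {..<L}" "Z' \<subseteq> {..<L'}"
    and code: "profile_code (L, Z) = profile_code (L', Z')"
  let ?C = "changes (L - 1) (\<lambda>i. i \<in> Z)" and ?C' = "changes (L' - 1) (\<lambda>i. i \<in> Z')"
  have ends: "0 \<in> Z \<longleftrightarrow> 0 \<in> Z'" "L - 1 \<in> Z \<longleftrightarrow> L' - 1 \<in> Z'"
    and top: "insert L ?C = insert L' ?C'"
    using code unfolding profile_code_def by auto
  have "?C \<subseteq> {..<L}" "?C' \<subseteq> {..<L'}"
    using changes_subset[of "L - 1"] changes_subset[of "L' - 1"] by fastforce+
  with top have "L = L'"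
    by (metis insertCI insertE leD lessThan_iff less_imp_le subset_iff)
  with top \<open>?C \<subseteq> {..<L}\<close> \<open>?C' \<subseteq> {..<L'}\<close> have "?C = ?C'"
    by (metis insert_ident lessThan_iff less_irrefl subsetD)
  have "i \<in> Z \<longleftrightarrow> i \<in> Z'" if "i < L" for i
  proof (cases "i = L - 1")
    case True
    then show ?thesis
      using ends(2) \<open>L = L'\<close> by simp
  next
    case False
    with that have "i < L - 1"
      by simp
    with ends(1) \<open>?C = ?C'\<close> \<open>L = L'\<close> show ?thesis
      using eq_if_same_changes[of "\<lambda>i. i \<in> Z" "\<lambda>i. i \<in> Z'"] by simp
  qed
  with Z \<open>L = L'\<close> show "L = L' \<and> Z = Z'"
    by blast
qed

lemma card_small_subsets_le:
  assumes "finite A"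
  shows "card {S. S \<subseteq> A \<and> card S \<le> k} \<le> (\<Sum>j\<le>k. card A choose j)"
proof -
  have "{S. S \<subseteq> A \<and> card S \<le> k} = (\<Union>j\<le>k. {S. S \<subseteq> A \<and> card S = j})"
    by auto
  then have "card {S. S \<subseteq> A \<and> card S \<le> k} \<le> (\<Sum>j\<le>k. card {S. S \<subseteq> A \<and> card S = j})"
    by (simp add: card_UN_le)
  also have "\<dots> = (\<Sum>j\<le>k. card A choose j)"
    using n_subsets[OF assms] by simp
  finally show ?thesis .
qed

lemma card_profiles_le: "card (profiles m) \<le> 4 * (\<Sum>j\<le>5. Suc m choose j)"
proof -
  let ?S = "{S. S \<subseteq> {..m} \<and> card S \<le> 5}"
  have "profile_code ` profiles m \<subseteq> UNIV \<times> UNIV \<times> ?S"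
  proof
    fix c assume "c \<in> profile_code ` profiles m"
    then obtain L Z where "(L, Z) \<in> profiles m" "c = profile_code (L, Z)"
      by auto
    moreover from this(1) have "L \<le> m" "card (changes (L - 1) (\<lambda>i. i \<in> Z)) \<le> 4"
      unfolding profiles_def by auto
    moreover have "changes (L - 1) (\<lambda>i. i \<in> Z) \<subseteq> {..<L}"
      using changes_subset[of "L - 1"] by fastforce
    moreover from this have "finite (changes (L - 1) (\<lambda>i. i \<in> Z))"
      using finite_subset by blast
    ultimately show "c \<in> UNIV \<times> UNIV \<times> ?S"
      unfolding profile_code_def by (auto simp: card_insert_if)
  qed
  moreover have "inj_on profile_code (profiles m)"
    by (rule inj_on_subset[OF inj_on_profile_code]) (auto simp: profiles_def)
  ultimately have "card (profiles m) \<le> card ((UNIV :: bool set) \<times> (UNIV :: bool set) \<times> ?S)"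
    by (intro card_inj_on_le) auto
  also have "\<dots> = 4 * card ?S"
    by (simp add: card_cartesian_product)
  also have "\<dots> \<le> 4 * (\<Sum>j\<le>5. Suc m choose j)"
    using card_small_subsets_le[of "{..m}" 5] by simp
  finally show ?thesis .
qed

lemma four_sum_binomial_le:
  fixes n m :: nat
  assumes "5 \<le> n" "m \<le> 2 * n"
  shows "4 * (\<Sum>j\<le>5. m choose j) \<le> 64 * n ^ 5"
proof -
  have small: "m choose j \<le> 2 ^ j * n ^ j" for j
  proof -
    have "m choose j \<le> (m choose j) * fact j"
      by simp
    also have "\<dots> \<le> m ^ j"
      by (rule binomial_fact_pow)
    also have "\<dots> \<le> 2 ^ j * n ^ j"
      using power_mono[OF assms(2)] by (simp add: power_mult_distrib)
    finally show ?thesis .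
  qed
  have top: "(m choose 5) * 120 \<le> 32 * n ^ 5"
    using binomial_fact_pow[of m 5] power_mono[OF assms(2), of 5]
    by (simp add: fact_numeral power_mult_distrib)
  have growth: "5 * n ^ k \<le> n ^ Suc k" for k
    using assms(1) by simp
  have "(\<Sum>j\<le>5. m choose j) =
      (m choose 0) + (m choose 1) + (m choose 2) + (m choose 3) + (m choose 4) + (m choose 5)"
    by (simp add: numeral_eq_Suc)
  with small[of 0] small[of 1] small[of 2] small[of 3] small[of 4] top
    growth[of 0] growth[of 1] growth[of 2] growth[of 3] growth[of 4] assms(1)
  show ?thesis
    by (simp add: numeral_eq_Suc)
qed

lemma no_five_alternations:
  fixes C :: "nat \<Rightarrow> nat \<Rightarrow> bool" and s :: "nat \<Rightarrow> bool"
  assumes alternating: "\<And>i. i < 5 \<Longrightarrow> s (Suc i) \<noteq> s i"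
    and up: "\<And>i j k. i < j \<Longrightarrow> j < k \<Longrightarrow> k \<le> 6 \<Longrightarrow> \<not> s i \<Longrightarrow> s j \<Longrightarrow> C i k = C j k"
    and down: "\<And>i j k. i < j \<Longrightarrow> j < k \<Longrightarrow> k \<le> 6 \<Longrightarrow> s i \<Longrightarrow> \<not> s j \<Longrightarrow>
      \<not> (C i k = C j k \<and> C j k = C i j)"
  shows False
  \<comment> \<open>For s 0 false: by up, C i 6 does not depend on i; down at (1, 2, 6) and (3, 4, 6) then
     fixes C 1 2 and C 3 4 (= C 2 4 by up) to the other value, and down at (1, 2, 4) and (1, 4, 6)
     clash. For s 0 true the witnesses 3, 5 and 6 play the same role.\<close>
proof (cases "s 0")
  case False
  then have s: "\<not> s 0" "s 1" "\<not> s 2" "s 3" "\<not> s 4" "s 5"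
    using alternating[of 0] alternating[of 1] alternating[of 2] alternating[of 3] alternating[of 4]
    by (auto simp: numeral_eq_Suc)
  show False
    using up[of 0 1 6] up[of 0 5 6] up[of 2 3 4] up[of 2 3 6] up[of 2 5 6] up[of 4 5 6]
      down[of 1 2 4] down[of 1 2 6] down[of 1 4 6] down[of 3 4 6] s
    by auto
next
  case True
  then have s: "s 0" "\<not> s 1" "s 2" "\<not> s 3" "s 4" "\<not> s 5"
    using alternating[of 0] alternating[of 1] alternating[of 2] alternating[of 3] alternating[of 4]
    by (auto simp: numeral_eq_Suc)
  show False
    using up[of 1 2 3] up[of 1 2 5] up[of 1 2 6] up[of 1 4 5] up[of 1 4 6] up[of 3 4 5] up[of 3 4 6]
      down[of 0 1 3] down[of 0 1 5] down[of 0 1 6] down[of 0 3 5] down[of 0 3 6] down[of 0 5 6]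
      down[of 2 3 5] down[of 2 3 6] down[of 2 5 6] s
    by auto
qed

section \<open>Independent sets of the stepping-up hypergraph\<close>

definition diff_bits :: "nat set \<Rightarrow> nat \<Rightarrow> nat set" where
  "diff_bits I a = diff_bit a ` (I - {a})"

locale stepup_independent_set =
  fixes M :: nat and \<phi> :: "nat set \<Rightarrow> bool" and I :: "nat set"
  assumes subset: "I \<subseteq> {0..<2 ^ M}"
    and independent: "\<forall>e\<in>stepup_hypergraph M \<phi>. \<not> e \<subseteq> I"
begin

lemma finite_I: "finite I"
  using subset finite_subset by blast

lemma diff_bits_subset:
  assumes "a \<in> I"
  shows "diff_bits I a \<subseteq> {0..<M}"
proof
  fix u assume "u \<in> diff_bits I a"
  then obtain b where "b \<in> I" "b \<noteq> a" "u = diff_bit a b"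
    unfolding diff_bits_def by blast
  moreover have "a < 2 ^ M" "b < 2 ^ M"
    using assms \<open>b \<in> I\<close> subset by auto
  ultimately show "u \<in> {0..<M}"
    using diff_bit_less by simp
qed

lemma no_edge_pattern:
  assumes "y1 < y2" "y2 < y3" "y3 < y4" "y1 \<in> I" "y2 \<in> I" "y3 \<in> I" "y4 \<in> I"
  shows "\<not> edge_pattern \<phi> (diff_bit y1 y2) (diff_bit y2 y3) (diff_bit y3 y4)"
proof
  assume "edge_pattern \<phi> (diff_bit y1 y2) (diff_bit y2 y3) (diff_bit y3 y4)"
  moreover have "y4 < 2 ^ M"
    using subset assms(7) by auto
  ultimately have "{y1, y2, y3, y4} \<in> stepup_hypergraph M \<phi>"
    using mem_stepup_hypergraph_iff[OF assms(1-3)] by simp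
  moreover have "{y1, y2, y3, y4} \<subseteq> I"
    using assms(4-7) by simp
  ultimately show False
    using independent by blast
qed

lemma link_quadruple:
  assumes a: "a \<in> I" and bits: "w \<in> diff_bits I a" "u2 \<in> diff_bits I a" "u1 \<in> diff_bits I a"
    and less: "w < u2" "u2 < u1"
  obtains x1 x2 q r where "x1 \<in> I" "x2 \<in> I" "q \<in> I" "r \<in> I" "x1 < x2"
    "diff_bit x1 x2 = w" "diff_bit x2 q = u2" "diff_bit q x1 = u2"
    "diff_bit q r = u1" "diff_bit r q = u1" "diff_bit x2 r = u1" "diff_bit r x1 = u1"
    "q < x1 \<longleftrightarrow> bit a u2" "x2 < q \<longleftrightarrow> \<not> bit a u2"
    "r < x1 \<longleftrightarrow> bit a u1" "x2 < r \<longleftrightarrow> \<not> bit a u1" "r < q \<longleftrightarrow> bit a u1" "q < r \<longleftrightarrow> \<not> bit a u1"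
  \<comment> \<open>x1 and x2 are a and a witness p for w, and q, r are witnesses for u2, u1.\<close>
proof -
  obtain p q r where pqr: "p \<in> I" "q \<in> I" "r \<in> I" "p \<noteq> a" "q \<noteq> a" "r \<noteq> a"
    and diffs: "diff_bit a p = w" "diff_bit a q = u2" "diff_bit a r = u1"
    using bits unfolding diff_bits_def by blast
  have "q \<noteq> r"
    using diffs less by auto
  have qr: "diff_bit q r = u1" "diff_bit r q = u1" "r < q \<longleftrightarrow> bit a u1"
    using diff_bit_ultrametric[of a q r] diff_bit_commute[of r q] less_iff_bit_diff_bit[of r q]
      bit_eq_above_diff_bit[of a q u1] pqr diffs less \<open>q \<noteq> r\<close>
    by auto
  have near: "diff_bit x q = u2 \<and> diff_bit q x = u2 \<and> diff_bit x r = u1 \<and> diff_bit r x = u1 \<and>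
      (q < x \<longleftrightarrow> bit a u2) \<and> (x < q \<longleftrightarrow> \<not> bit a u2) \<and>
      (r < x \<longleftrightarrow> bit a u1) \<and> (x < r \<longleftrightarrow> \<not> bit a u1)"
    if "x \<in> {a, p}" for x
  proof -
    have "x \<noteq> q" "x \<noteq> r" "diff_bit x q = u2" "diff_bit x r = u1"
      using that diff_bit_ultrametric[of a p q] diff_bit_ultrametric[of a p r] pqr diffs less
      by auto
    moreover have "bit x u2 = bit a u2" "bit x u1 = bit a u1"
      using that bit_eq_above_diff_bit[of a p] pqr diffs less by auto
    ultimately show ?thesis
      using less_iff_bit_diff_bit[of q x] less_iff_bit_diff_bit[of r x]
        diff_bit_commute[of x q] diff_bit_commute[of x r]
      by auto
  qed
  have "min a p < max a p" "diff_bit (min a p) (max a p) = w"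
    using pqr diffs diff_bit_commute[of a p] by (auto simp: min_def max_def)
  moreover have "min a p \<in> I" "max a p \<in> I" "min a p \<in> {a, p}" "max a p \<in> {a, p}"
    using a pqr by (simp_all add: min_def max_def)
  moreover have "q < r \<longleftrightarrow> \<not> bit a u1"
    using qr(3) \<open>q \<noteq> r\<close> by auto
  ultimately show thesis
    using that[of "min a p" "max a p" q r] near[of "min a p"] near[of "max a p"] pqr qr
    by blast
qed

lemma link_triple:
  assumes a: "a \<in> I" and bits: "w \<in> diff_bits I a" "u2 \<in> diff_bits I a" "u1 \<in> diff_bits I a"
    and less: "w < u2" "u2 < u1"
  shows "bit a u1 = bit a u2 \<Longrightarrow> \<not> (\<phi> {w, u2} = \<phi> {u2, u1} \<and> \<phi> {w, u2} \<noteq> \<phi> {w, u1})"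
    and "\<not> bit a u1 \<Longrightarrow> bit a u2 \<Longrightarrow> \<phi> {u1, w} = \<phi> {u2, w}"
    and "bit a u1 \<Longrightarrow> \<not> bit a u2 \<Longrightarrow> \<not> (\<phi> {u1, w} = \<phi> {u2, w} \<and> \<phi> {u2, w} = \<phi> {u1, u2})"
proof -
  obtain x1 x2 q r where mem: "x1 \<in> I" "x2 \<in> I" "q \<in> I" "r \<in> I" and "x1 < x2"
    and diffs: "diff_bit x1 x2 = w" "diff_bit x2 q = u2" "diff_bit q x1 = u2"
      "diff_bit q r = u1" "diff_bit r q = u1" "diff_bit x2 r = u1" "diff_bit r x1 = u1"
    and order: "q < x1 \<longleftrightarrow> bit a u2" "x2 < q \<longleftrightarrow> \<not> bit a u2"
      "r < x1 \<longleftrightarrow> bit a u1" "x2 < r \<longleftrightarrow> \<not> bit a u1" "r < q \<longleftrightarrow> bit a u1"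
      "q < r \<longleftrightarrow> \<not> bit a u1"
    using link_quadruple[OF assms] .
  show "\<not> (\<phi> {w, u2} = \<phi> {u2, u1} \<and> \<phi> {w, u2} \<noteq> \<phi> {w, u1})" if "bit a u1 = bit a u2"
  proof (cases "bit a u1")
    case False
    with that order have "\<not> edge_pattern \<phi> w u2 u1"
      using no_edge_pattern[of x1 x2 q r] \<open>x1 < x2\<close> mem diffs by simp
    then show ?thesis
      using less unfolding edge_pattern_def by auto
  next
    case True
    with that order have "\<not> edge_pattern \<phi> u1 u2 w"
      using no_edge_pattern[of r q x1 x2] \<open>x1 < x2\<close> mem diffs by simp
    then show ?thesis
      using less insert_commute[of u1 u2 "{}"] insert_commute[of u2 w "{}"] insert_commute[of u1 w "{}"]
      unfolding edge_pattern_def by auto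
  qed
  show "\<phi> {u1, w} = \<phi> {u2, w}" if "\<not> bit a u1" "bit a u2"
  proof -
    from that order have "\<not> edge_pattern \<phi> u2 w u1"
      using no_edge_pattern[of q x1 x2 r] \<open>x1 < x2\<close> mem diffs by simp
    then show ?thesis
      using less insert_commute[of w u1 "{}"] unfolding edge_pattern_def by auto
  qed
  show "\<not> (\<phi> {u1, w} = \<phi> {u2, w} \<and> \<phi> {u2, w} = \<phi> {u1, u2})" if "bit a u1" "\<not> bit a u2"
  proof -
    from that order have "\<not> edge_pattern \<phi> u1 w u2"
      using no_edge_pattern[of r x1 x2 q] \<open>x1 < x2\<close> mem diffs by simp
    then show ?thesis
      using less insert_commute[of w u2 "{}"] unfolding edge_pattern_def by auto
  qed
qed

end

definition bit_profile :: "nat set \<Rightarrow> nat \<Rightarrow> nat set" where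
  "bit_profile I a = card_above (diff_bits I a) ` {u \<in> diff_bits I a. bit a u}"

lemma finite_diff_bits: "finite I \<Longrightarrow> finite (diff_bits I a)"
  unfolding diff_bits_def by simp

lemma card_above_mem_bit_profile_iff:
  assumes "finite I" "u \<in> diff_bits I a"
  shows "card_above (diff_bits I a) u \<in> bit_profile I a \<longleftrightarrow> bit a u"
  using assms inj_on_card_above[OF finite_diff_bits[OF assms(1)]]
  unfolding bit_profile_def inj_on_def by blast

lemma card_above_diff_bits_eq:
  assumes "a \<in> I" "b \<in> I" "a \<noteq> b"
  shows "card_above (diff_bits I a) (diff_bit a b) = card_above (diff_bits I b) (diff_bit a b)"
proof -
  have "{v \<in> diff_bits I x. diff_bit x y < v} \<subseteq> {v \<in> diff_bits I y. diff_bit x y < v}"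
    if "x \<in> I" "y \<in> I" "x \<noteq> y" for x y
  proof
    fix v assume "v \<in> {v \<in> diff_bits I x. diff_bit x y < v}"
    then obtain c where c: "c \<in> I" "c \<noteq> x" "v = diff_bit x c" "diff_bit x y < v"
      unfolding diff_bits_def by blast
    then have "v = diff_bit y c" "c \<in> I - {y}"
      using diff_bit_ultrametric[of x y c] that by auto
    with c(4) show "v \<in> {v \<in> diff_bits I y. diff_bit x y < v}"
      unfolding diff_bits_def by blast
  qed
  from this[OF assms] this[OF assms(2,1) assms(3)[symmetric]] show ?thesis
    unfolding card_above_def diff_bit_commute[of b a] by (metis subset_antisym)
qed

lemma inj_on_bit_profile:
  assumes "finite I"
  shows "inj_on (bit_profile I) I"
proof (rule inj_onI, rule ccontr)
  fix a b assume ab: "a \<in> I" "b \<in> I" "bit_profile I a = bit_profile I b" "a \<noteq> b"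
  let ?u = "diff_bit a b"
  have "?u \<in> diff_bits I a" "diff_bit b a \<in> diff_bits I b"
    using ab unfolding diff_bits_def by auto
  then have u: "?u \<in> diff_bits I a" "?u \<in> diff_bits I b"
    by (simp_all only: diff_bit_commute[of b a])
  have "bit a ?u \<noteq> bit b ?u"
    using less_iff_bit_diff_bit[of a b] less_iff_bit_diff_bit[of b a] diff_bit_commute[of a b] ab(4)
    by auto
  with ab(3) show False
    using card_above_mem_bit_profile_iff[OF assms u(1)] card_above_mem_bit_profile_iff[OF assms u(2)]
      card_above_diff_bits_eq[OF ab(1,2,4)] by simp
qed

context stepup_independent_set
begin

lemma card_diff_bits_le:
  assumes a: "a \<in> I"
    and triangles: "\<forall>S. S \<subseteq> {0..<M} \<and> card S = n \<longrightarrow>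
           (\<exists>x\<in>S. \<exists>y\<in>S. \<exists>z\<in>S. x < y \<and> y < z \<and> \<phi> {x, y} = \<phi> {y, z} \<and> \<phi> {x, y} \<noteq> \<phi> {x, z})"
  shows "card (diff_bits I a) \<le> 2 * n - 2"
proof -
  have side_small: "card {u \<in> diff_bits I a. bit a u = t} < n" for t
  proof (rule ccontr)
    assume "\<not> ?thesis"
    then obtain S where S: "S \<subseteq> {u \<in> diff_bits I a. bit a u = t}" "card S = n"
      by (meson not_less obtain_subset_with_card_n)
    moreover have "S \<subseteq> {0..<M}"
      using S(1) diff_bits_subset[OF a] by blast
    ultimately obtain x y z where "x \<in> S" "y \<in> S" "z \<in> S" "x < y" "y < z"
      "\<phi> {x, y} = \<phi> {y, z} \<and> \<phi> {x, y} \<noteq> \<phi> {x, z}"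
      using triangles by blast
    with S(1) show False
      using link_triple(1)[OF a, of x y z] by auto
  qed
  have "diff_bits I a = {u \<in> diff_bits I a. bit a u = True} \<union> {u \<in> diff_bits I a. bit a u = False}"
    by auto
  then have "card (diff_bits I a) \<le>
      card {u \<in> diff_bits I a. bit a u = True} + card {u \<in> diff_bits I a. bit a u = False}"
    by (metis card_Un_le)
  with side_small[of True] side_small[of False] show ?thesis
    by linarith
qed

lemma no_alternating_diff_bits:
  assumes a: "a \<in> I" and v: "\<And>i. i \<le> 6 \<Longrightarrow> v i \<in> diff_bits I a"
    and decreasing: "\<And>i j. i < j \<Longrightarrow> j \<le> 6 \<Longrightarrow> v j < v i"
    and alternating: "\<And>i. i < 5 \<Longrightarrow> bit a (v (Suc i)) \<noteq> bit a (v i)"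
  shows False
proof (rule no_five_alternations[of "\<lambda>i. bit a (v i)" "\<lambda>i j. \<phi> {v i, v j}"])
  fix i j k :: nat assume "i < j" "j < k" "k \<le> 6"
  then have "v k < v j" "v j < v i" "v i \<in> diff_bits I a" "v j \<in> diff_bits I a" "v k \<in> diff_bits I a"
    using decreasing v by simp_all
  note triple = link_triple[OF a this(5,4,3,1,2)]
  show "\<phi> {v i, v k} = \<phi> {v j, v k}" if "\<not> bit a (v i)" "bit a (v j)"
    using triple(2) that .
  show "\<not> (\<phi> {v i, v k} = \<phi> {v j, v k} \<and> \<phi> {v j, v k} = \<phi> {v i, v j})"
    if "bit a (v i)" "\<not> bit a (v j)"
    using triple(3) that .
qed (use alternating in simp)

(* Only the first L - 1 ranks count: the smallest position only ever plays the role of w in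
   link_triple, so the bit of a there is unconstrained. *)
lemma card_changes_bit_profile_le:
  assumes a: "a \<in> I"
  shows "card (changes (card (diff_bits I a) - 1) (\<lambda>i. i \<in> bit_profile I a)) \<le> 4"
proof (rule ccontr)
  let ?D = "diff_bits I a" and ?f = "\<lambda>i. i \<in> bit_profile I a"
  let ?L = "card ?D"
  assume "\<not> ?thesis"
  then have many: "5 \<le> card (changes (?L - 1) ?f)"
    by simp
  then have "changes (?L - 1) ?f \<noteq> {}"
    by auto
  then have L: "Suc (?L - 2) = ?L - 1"
    unfolding changes_def by auto
  with many obtain g where g: "\<forall>j<5. g j < g (Suc j) \<and> ?f (g (Suc j)) \<noteq> ?f (g j)" "g 5 = ?L - 2"
    using alternating_chain[of 5 "?L - 2" ?f] by auto
  define h where "h = g(6 := ?L - 1)"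
  have "h j < h (Suc j)" if "j < 6" for j
    using that g L unfolding h_def by (auto simp: less_Suc_eq)
  moreover have "h 6 < ?L"
    using L unfolding h_def by simp
  ultimately obtain v where v: "\<And>i. i \<le> 6 \<Longrightarrow> v i \<in> ?D \<and> card_above ?D (v i) = h i"
    and decreasing: "\<And>i j. i < j \<Longrightarrow> j \<le> 6 \<Longrightarrow> v j < v i"
    using decreasing_elements_with_card_above[OF finite_diff_bits[OF finite_I]] by blast
  have "bit a (v j) \<longleftrightarrow> g j \<in> bit_profile I a" if "j \<le> 5" for j
    using that v[of j] card_above_mem_bit_profile_iff[OF finite_I, of "v j" a]
    unfolding h_def by simp
  then have "bit a (v (Suc i)) \<noteq> bit a (v i)" if "i < 5" for i
    using g(1) that by simp
  with v decreasing show False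
    by (intro no_alternating_diff_bits[OF a]) auto
qed

lemma card_le:
  assumes "5 \<le> n"
    and triangles: "\<forall>S. S \<subseteq> {0..<M} \<and> card S = n \<longrightarrow>
           (\<exists>x\<in>S. \<exists>y\<in>S. \<exists>z\<in>S. x < y \<and> y < z \<and> \<phi> {x, y} = \<phi> {y, z} \<and> \<phi> {x, y} \<noteq> \<phi> {x, z})"
  shows "card I \<le> 64 * n ^ 5"
proof -
  let ?profile = "\<lambda>a. (card (diff_bits I a), bit_profile I a)"
  have "inj_on ?profile I"
    using inj_on_bit_profile[OF finite_I] by (auto simp: inj_on_def)
  moreover have "?profile ` I \<subseteq> profiles (2 * n - 2)"
  proof clarify
    fix a assume a: "a \<in> I"
    have "bit_profile I a \<subseteq> {..<card (diff_bits I a)}"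
      using card_above_less_card[OF finite_diff_bits[OF finite_I]] unfolding bit_profile_def by auto
    with card_diff_bits_le[OF a triangles] card_changes_bit_profile_le[OF a]
    show "?profile a \<in> profiles (2 * n - 2)"
      unfolding profiles_def by simp
  qed
  moreover have "finite (profiles (2 * n - 2))"
    by (rule finite_subset[of _ "{..2 * n - 2} \<times> Pow {..<2 * n - 2}"]) (auto simp: profiles_def)
  ultimately have "card I \<le> card (profiles (2 * n - 2))"
    by (rule card_inj_on_le)
  also have "\<dots> \<le> 4 * (\<Sum>j\<le>5. Suc (2 * n - 2) choose j)"
    by (rule card_profiles_le)
  also have "\<dots> \<le> 64 * n ^ 5"
    using four_sum_binomial_le[OF assms(1), of "Suc (2 * n - 2)"] assms(1) by simp
  finally show ?thesis .
qed

end

theorem mainTheorem5: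
  fixes n M :: nat and \<phi> :: "nat set \<Rightarrow> bool"
  assumes "n \<ge> 5" and "M \<ge> 1"
    and "\<forall>S. S \<subseteq> {0..<M} \<and> card S = n \<longrightarrow>
           (\<exists>x\<in>S. \<exists>y\<in>S. \<exists>z\<in>S. x < y \<and> y < z \<and>
              \<phi> {x, y} = \<phi> {y, z} \<and> \<phi> {x, y} \<noteq> \<phi> {x, z})"
  shows "hramsey 4 5 (2^6 * n^5 + 1) > 2^M"
proof (rule less_hramsey[OF uniform_stepup_hypergraph stepup_hypergraph_no_K5])
  show "\<not> has_indep (2 ^ 6 * n ^ 5 + 1) (2 ^ M) (stepup_hypergraph M \<phi>)"
  proof
    assume "has_indep (2 ^ 6 * n ^ 5 + 1) (2 ^ M) (stepup_hypergraph M \<phi>)"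
    then obtain I where I: "I \<subseteq> {0..<2 ^ M}" "card I = 2 ^ 6 * n ^ 5 + 1"
      "\<forall>e\<in>stepup_hypergraph M \<phi>. \<not> e \<subseteq> I"
      unfolding has_indep_def by blast
    then interpret stepup_independent_set M \<phi> I
      by unfold_locales
    have "card I \<le> 64 * n ^ 5"
      using card_le assms(1,3) .
    with I(2) show False
      by simp
  qed
qed

end
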